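(* Let $F$ be a field, $n\in\mathbb N\cup\{\infty\}$, and let $\varphi:\mathrm{UT}(n,F)\to\mathrm{UT}(n,F)$ be an almost identity PC-map. Then for every $a\in\mathrm{UT}(n,F)$ we have $\varphi(a)_{ij}=a_{ij}$ and $(\varphi(a)^{-1})_{ij}=(a^{-1})_{ij}$ for all indices $i\ge 2$ and $j\le n-1$ (when $n=\infty$, $j\le n-1$ means $j$ arbitrary). In other words, $\varphi(a)$ and $a$ (and also their inverses) can differ only in the first row and the last column.
   Context: $F$ is a field and $n\in\mathbb N\cup\{\infty\}$. $\mathrm{UT}(n,F)$ is the group of upper unitriangular $n\times n$ matrices over $F$; for $n=\infty$ the rows and columns are indexed by $\mathbb N=\{1,2,\dots\}$ and $\mathrm{UT}(\infty,F)$ consists of all $\mathbb N\times\mathbb N$ matrices with $1$ on the diagonal and $0$ below it. Convention: $\infty+m=\infty$ for $m\in\mathbb Z$. $e$ is the identity matrix, $e_{ij}$ the matrix unit, $t_{ij}(\alpha)=e+\alpha e_{ij}$ ($i<j$, $\alpha\in F$) the elementary transvection. $a_{ij}$ denotes the $(i,j)$-entry of $a$. The group commutator is $[x,y]=xyx^{-1}y^{-1}$. A PC-map of a group $G$ is a bijection $\varphi:G\to G$ with $\varphi([x,y])=[\varphi(x),\varphi(y)]$ for all $x,y\in G$. A map $\varphi:\mathrm{UT}(n,F)\to\mathrm{UT}(n,F)$ is almost identity if $\varphi(t_{ij}(\alpha))=t_{ij}(\alpha)$ for all $i<j$ and $\alpha\in F$. *)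

theory Defs
  imports "HOL-Algebra.Group" "HOL-Library.Extended_Nat"
begin

text \<open>Matrices indexed by positive naturals; for n :: enat the index set is
  {1..n} (n finite) or all positive naturals (n = infinity). Entries outside the
  index set are required to be 0, so that each element of UT(n,F) has a unique
  representation.\<close>

type_synonym 'a nmat = "nat \<Rightarrow> nat \<Rightarrow> 'a"

definition idx :: "enat \<Rightarrow> nat set" where
  "idx n = {i. 1 \<le> i \<and> enat i \<le> n}"

definition UT_set :: "enat \<Rightarrow> ('a::field) nmat set" where
  "UT_set n = {a. (\<forall>i j. a i j \<noteq> 0 \<longrightarrow> i \<in> idx n \<and> j \<in> idx n \<and> i \<le> j)
                 \<and> (\<forall>i\<in>idx n. a i i = 1)}"

text \<open>Product of upper triangular matrices: the sum is finite since only
  indices i..j contribute.\<close>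
definition ut_mult :: "('a::field) nmat \<Rightarrow> 'a nmat \<Rightarrow> 'a nmat" where
  "ut_mult a b = (\<lambda>i j. \<Sum>k\<in>{i..j}. a i k * b k j)"

definition ut_one :: "enat \<Rightarrow> ('a::field) nmat" where
  "ut_one n = (\<lambda>i j. if i = j \<and> i \<in> idx n then 1 else 0)"

definition UT :: "enat \<Rightarrow> ('a::field) nmat monoid" where
  "UT n = \<lparr>carrier = UT_set n, mult = ut_mult, one = ut_one n\<rparr>"

definition comm :: "('g, 'b) monoid_scheme \<Rightarrow> 'g \<Rightarrow> 'g \<Rightarrow> 'g" where
  "comm G x y = x \<otimes>\<^bsub>G\<^esub> y \<otimes>\<^bsub>G\<^esub> inv\<^bsub>G\<^esub> x \<otimes>\<^bsub>G\<^esub> inv\<^bsub>G\<^esub> y"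

definition PC_map :: "('g, 'b) monoid_scheme \<Rightarrow> ('g \<Rightarrow> 'g) \<Rightarrow> bool" where
  "PC_map G \<phi> \<longleftrightarrow> bij_betw \<phi> (carrier G) (carrier G) \<and>
     (\<forall>x\<in>carrier G. \<forall>y\<in>carrier G. \<phi> (comm G x y) = comm G (\<phi> x) (\<phi> y))"

definition transv :: "enat \<Rightarrow> nat \<Rightarrow> nat \<Rightarrow> 'a::field \<Rightarrow> 'a nmat" where
  "transv n i j \<alpha> = (\<lambda>k l. ut_one n k l + (if k = i \<and> l = j then \<alpha> else 0))"

definition almost_identity :: "enat \<Rightarrow> (('a::field) nmat \<Rightarrow> 'a nmat) \<Rightarrow> bool" where
  "almost_identity n \<phi> \<longleftrightarrow>
     (\<forall>i\<in>idx n. \<forall>j\<in>idx n. \<forall>\<alpha>. i < j \<longrightarrow> \<phi> (transv n i j \<alpha>) = transv n i j \<alpha>)"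

end

theory Submission
  imports Defs
begin

(* The double commutator [[t_1i(1), x], t_kl(1)] with 2 <= i <= k < l is the
   transvection t_1l(delta_ik - (x^-1)_ik).  Since phi fixes transvections and
   preserves commutators, x^-1 and phi(x)^-1 agree at (i,k) whenever 2 <= i and
   k <= n - 1 (take l = k + 1).  Entries of upper unitriangular matrices in an
   interval block of indices only interact within that block, so agreement of the
   inverses on the block {2..n-1} forces agreement of the matrices there. *)

lemma UT_set_zero:
  assumes "a \<in> UT_set n"
  shows "j < i \<Longrightarrow> a i j = 0" "i \<notin> idx n \<Longrightarrow> a i j = 0" "j \<notin> idx n \<Longrightarrow> a i j = 0"
  using assms unfolding UT_set_def by (auto simp: not_le[symmetric])

lemma UT_set_diag: "a \<in> UT_set n \<Longrightarrow> i \<in> idx n \<Longrightarrow> a i i = 1"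
  unfolding UT_set_def by auto

lemma idx_interval: "i \<in> idx n \<Longrightarrow> j \<in> idx n \<Longrightarrow> i \<le> k \<Longrightarrow> k \<le> j \<Longrightarrow> k \<in> idx n"
  unfolding idx_def by (metis (mono_tags) enat_ord_simps(1) mem_Collect_eq order_trans le_trans)

lemma idx_one: "i \<in> idx n \<Longrightarrow> 1 \<in> idx n"
  unfolding idx_def by (auto intro: order_trans[of _ "enat i"])

lemma idx_Suc: "j \<in> idx n \<Longrightarrow> enat j \<le> n - 1 \<Longrightarrow> Suc j \<in> idx n"
  unfolding idx_def by (cases n) (auto simp: one_enat_def)

lemma sum_triangle_swap:
  fixes f :: "nat \<Rightarrow> nat \<Rightarrow> 'b::comm_monoid_add"
  shows "(\<Sum>k\<in>{i..j}. \<Sum>m\<in>{i..k}. f m k) = (\<Sum>m\<in>{i..j}. \<Sum>k\<in>{m..j}. f m k)"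
proof -
  have "(\<Sum>k\<in>{i..j}. \<Sum>m\<in>{i..k}. f m k) = (\<Sum>k\<in>{i..j}. \<Sum>m\<in>{i..j}. if m \<le> k then f m k else 0)"
  proof (rule sum.cong[OF refl])
    fix k assume k: "k \<in> {i..j}"
    have "(\<Sum>m\<in>{i..j}. if m \<le> k then f m k else 0) = sum (\<lambda>m. f m k) {m\<in>{i..j}. m \<le> k}"
      by (rule sum.inter_filter[symmetric]) simp
    also have "{m\<in>{i..j}. m \<le> k} = {i..k}" using k by auto
    finally show "(\<Sum>m\<in>{i..k}. f m k) = (\<Sum>m\<in>{i..j}. if m \<le> k then f m k else 0)" by simp
  qed
  also have "\<dots> = (\<Sum>m\<in>{i..j}. \<Sum>k\<in>{i..j}. if m \<le> k then f m k else 0)"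
    by (rule sum.swap)
  also have "\<dots> = (\<Sum>m\<in>{i..j}. \<Sum>k\<in>{m..j}. f m k)"
  proof (rule sum.cong[OF refl])
    fix m assume m: "m \<in> {i..j}"
    have "(\<Sum>k\<in>{i..j}. if m \<le> k then f m k else 0) = sum (\<lambda>k. f m k) {k\<in>{i..j}. m \<le> k}"
      by (rule sum.inter_filter[symmetric]) simp
    also have "{k\<in>{i..j}. m \<le> k} = {m..j}" using m by auto
    finally show "(\<Sum>k\<in>{i..j}. if m \<le> k then f m k else 0) = (\<Sum>k\<in>{m..j}. f m k)" by simp
  qed
  finally show ?thesis .
qed

lemma ut_mult_assoc: "ut_mult (ut_mult a b) c = ut_mult a (ut_mult b c)"
proof (intro ext)
  fix i j
  have "ut_mult (ut_mult a b) c i j = (\<Sum>k\<in>{i..j}. \<Sum>m\<in>{i..k}. a i m * b m k * c k j)"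
    by (simp add: ut_mult_def sum_distrib_right)
  also have "\<dots> = (\<Sum>m\<in>{i..j}. \<Sum>k\<in>{m..j}. a i m * b m k * c k j)"
    by (rule sum_triangle_swap)
  also have "\<dots> = ut_mult a (ut_mult b c) i j"
    by (simp add: ut_mult_def sum_distrib_left mult.assoc)
  finally show "ut_mult (ut_mult a b) c i j = ut_mult a (ut_mult b c) i j" .
qed

lemma ut_mult_closed:
  assumes a: "a \<in> UT_set n" and b: "b \<in> UT_set n"
  shows "ut_mult a b \<in> UT_set n"
proof -
  have 1: "i \<in> idx n \<and> j \<in> idx n \<and> i \<le> j" if nz: "ut_mult a b i j \<noteq> 0" for i j
  proof -
    obtain k where k: "k \<in> {i..j}" "a i k * b k j \<noteq> 0"
      using nz unfolding ut_mult_def by (meson sum.not_neutral_contains_not_neutral)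
    then have "a i k \<noteq> 0" "b k j \<noteq> 0" by auto
    then show ?thesis
      using UT_set_zero[OF a] UT_set_zero[OF b] k by (meson atLeastAtMost_iff le_trans not_le)
  qed
  have 2: "ut_mult a b i i = 1" if i: "i \<in> idx n" for i
    using UT_set_diag[OF a i] UT_set_diag[OF b i] by (simp add: ut_mult_def)
  show ?thesis unfolding UT_set_def using 1 2 by blast
qed

lemma ut_one_mem: "ut_one n \<in> UT_set n"
  unfolding UT_set_def ut_one_def by auto

lemma ut_one_left: "a \<in> UT_set n \<Longrightarrow> ut_mult (ut_one n) a = a"
proof (intro ext)
  fix i j assume a: "a \<in> UT_set n"
  show "ut_mult (ut_one n) a i j = a i j"
  proof (cases "i \<le> j")
    case True
    have "ut_mult (ut_one n) a i j = (\<Sum>k\<in>{i..j}. if k = i then ut_one n i i * a i j else 0)"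
      unfolding ut_mult_def by (rule sum.cong) (auto simp: ut_one_def)
    also have "\<dots> = ut_one n i i * a i j" using True by simp
    also have "\<dots> = a i j" using UT_set_zero[OF a] by (auto simp: ut_one_def)
    finally show ?thesis .
  next
    case False then show ?thesis using UT_set_zero[OF a] by (simp add: ut_mult_def)
  qed
qed

lemma ut_one_right: "a \<in> UT_set n \<Longrightarrow> ut_mult a (ut_one n) = a"
proof (intro ext)
  fix i j assume a: "a \<in> UT_set n"
  show "ut_mult a (ut_one n) i j = a i j"
  proof (cases "i \<le> j")
    case True
    have "ut_mult a (ut_one n) i j = (\<Sum>k\<in>{i..j}. if k = j then a i j * ut_one n j j else 0)"
      unfolding ut_mult_def by (rule sum.cong) (auto simp: ut_one_def)
    also have "\<dots> = a i j * ut_one n j j" using True by simp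
    also have "\<dots> = a i j" using UT_set_zero[OF a] by (auto simp: ut_one_def)
    finally show ?thesis .
  next
    case False then show ?thesis using UT_set_zero[OF a] by (simp add: ut_mult_def)
  qed
qed

lemma monoid_UT: "monoid (UT n)"
  by (rule monoidI) (auto simp: UT_def ut_mult_closed ut_one_mem ut_mult_assoc ut_one_left ut_one_right)

function ut_linv :: "('a::field) nmat \<Rightarrow> nat \<Rightarrow> nat \<Rightarrow> 'a" where
  "ut_linv a i j = (if j \<le> i then (if i = j then 1 else 0) else - (\<Sum>k\<in>{i..<j}. ut_linv a i k * a k j))"
  by pat_completeness auto
termination by (relation "measure (\<lambda>(a,i,j). j - i)") auto

declare ut_linv.simps[simp del]

lemma UT_set_left_inverse:
  assumes a: "a \<in> UT_set n"
  shows "\<exists>b\<in>UT_set n. ut_mult b a = ut_one n"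
proof -
  define b where "b = (\<lambda>i j. if i \<in> idx n \<and> j \<in> idx n then ut_linv a i j else 0)"
  have bU: "b \<in> UT_set n"
    unfolding UT_set_def b_def by (auto simp: ut_linv.simps)
  have "ut_mult b a = ut_one n"
  proof (intro ext)
    fix i j
    show "ut_mult b a i j = ut_one n i j"
    proof (cases "i < j")
      case False
      then consider "j < i" | "i = j" by linarith
      then show ?thesis
      proof cases
        case 1 then show ?thesis by (simp add: ut_mult_def ut_one_def)
      next
        case 2 then show ?thesis using UT_set_diag[OF a, of j]
          by (auto simp: ut_mult_def ut_one_def b_def ut_linv.simps)
      qed
    next
      case True
      show ?thesis
      proof (cases "i \<in> idx n \<and> j \<in> idx n")
        case False
        then have "\<forall>k. b i k * a k j = 0" using UT_set_zero[OF a] by (auto simp: b_def)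
        then show ?thesis using True by (auto simp: ut_mult_def ut_one_def intro!: sum.neutral)
      next
        case ij: True
        have "ut_mult b a i j = (\<Sum>k\<in>{i..j}. ut_linv a i k * a k j)"
          unfolding ut_mult_def
          by (rule sum.cong[OF refl]) (use ij idx_interval in \<open>auto simp: b_def\<close>)
        also have "{i..j} = insert j {i..<j}" using True by auto
        also have "(\<Sum>k\<in>insert j {i..<j}. ut_linv a i k * a k j) = ut_linv a i j * a j j + (\<Sum>k\<in>{i..<j}. ut_linv a i k * a k j)"
          by simp
        also have "\<dots> = 0" using UT_set_diag[OF a, of j] ij True
          by (subst ut_linv.simps[of a i j]) simp
        finally show ?thesis using True by (simp add: ut_one_def)
      qed
    qed
  qed
  then show ?thesis using bU by blast
qed

lemma group_UT: "group (UT n)"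
  by (rule monoid.group_l_invI[OF monoid_UT]) (use UT_set_left_inverse in \<open>auto simp: UT_def\<close>)

lemma UT_simps [simp]: "carrier (UT n) = UT_set n" "mult (UT n) = ut_mult" "one (UT n) = ut_one n"
  by (simp_all add: UT_def)

lemma UT_inv_closed: "x \<in> UT_set n \<Longrightarrow> inv\<^bsub>UT n\<^esub> x \<in> UT_set n"
  using group.inv_closed[OF group_UT] by (metis UT_simps(1))

lemma UT_comm_closed: "x \<in> UT_set n \<Longrightarrow> y \<in> UT_set n \<Longrightarrow> comm (UT n) x y \<in> UT_set n"
  unfolding comm_def using group.inv_closed[OF group_UT] monoid.m_closed[OF monoid_UT]
  by (metis UT_simps(1))

lemma transv_mem: "i < j \<Longrightarrow> i \<in> idx n \<Longrightarrow> j \<in> idx n \<Longrightarrow> transv n i j \<alpha> \<in> UT_set n"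
  unfolding UT_set_def transv_def ut_one_def by auto

lemma transv_ut_mult:
  assumes pq: "p < q" and x: "x \<in> UT_set n"
  shows "ut_mult (transv n p q \<alpha>) x = (\<lambda>k l. x k l + (if k = p then \<alpha> * x q l else 0))"
proof (intro ext)
  fix k l
  have "ut_mult (transv n p q \<alpha>) x k l = ut_mult (ut_one n) x k l + (\<Sum>m\<in>{k..l}. (if k = p \<and> m = q then \<alpha> else 0) * x m l)"
    by (simp add: ut_mult_def transv_def distrib_right sum.distrib)
  also have "ut_mult (ut_one n) x k l = x k l" using ut_one_left[OF x] by simp
  also have "(\<Sum>m\<in>{k..l}. (if k = p \<and> m = q then \<alpha> else 0) * x m l) = (if k = p then \<alpha> * x q l else 0)"
  proof (cases "k = p \<and> q \<le> l")
    case True then show ?thesis using pq by (simp add: if_distrib[of "\<lambda>z. z * _"] sum.delta cong: if_cong)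
  next
    case False
    then have "\<forall>m\<in>{k..l}. (if k = p \<and> m = q then \<alpha> else 0) * x m l = 0" by auto
    then show ?thesis using False UT_set_zero(1)[OF x, of l q] by (auto intro: sum.neutral)
  qed
  finally show "ut_mult (transv n p q \<alpha>) x k l = x k l + (if k = p then \<alpha> * x q l else 0)" .
qed

lemma ut_mult_transv:
  assumes pq: "p < q" and x: "x \<in> UT_set n"
  shows "ut_mult x (transv n p q \<alpha>) = (\<lambda>k l. x k l + (if l = q then x k p * \<alpha> else 0))"
proof (intro ext)
  fix k l
  have "ut_mult x (transv n p q \<alpha>) k l = ut_mult x (ut_one n) k l + (\<Sum>m\<in>{k..l}. x k m * (if m = p \<and> l = q then \<alpha> else 0))"
    by (simp add: ut_mult_def transv_def distrib_left sum.distrib)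
  also have "ut_mult x (ut_one n) k l = x k l" using ut_one_right[OF x] by simp
  also have "(\<Sum>m\<in>{k..l}. x k m * (if m = p \<and> l = q then \<alpha> else 0)) = (if l = q then x k p * \<alpha> else 0)"
  proof (cases "l = q \<and> k \<le> p")
    case True then show ?thesis using pq by (simp add: if_distrib[of "\<lambda>z. _ * z"] sum.delta cong: if_cong)
  next
    case False
    then have "\<forall>m\<in>{k..l}. x k m * (if m = p \<and> l = q then \<alpha> else 0) = 0" by auto
    then show ?thesis using False UT_set_zero(1)[OF x, of p k] by (auto intro: sum.neutral)
  qed
  finally show "ut_mult x (transv n p q \<alpha>) k l = x k l + (if l = q then x k p * \<alpha> else 0)" .
qed

lemma ut_mult_add_first_row:
  "ut_mult (\<lambda>p q. A p q + (if p = 1 then r q else 0)) B =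
   (\<lambda>p q. ut_mult A B p q + (if p = 1 then (\<Sum>m\<in>{1..q}. r m * B m q) else 0))"
  by (intro ext) (simp add: ut_mult_def distrib_right sum.distrib)

lemma transv_inv:
  assumes "i < j" "i \<in> idx n" "j \<in> idx n"
  shows "inv\<^bsub>UT n\<^esub> (transv n i j \<alpha>) = transv n i j (- \<alpha>)"
proof -
  interpret group "UT n" by (rule group_UT)
  have "ut_mult (transv n i j (- \<alpha>)) (transv n i j \<alpha>) = ut_one n"
    using assms by (simp add: transv_ut_mult[OF assms(1) transv_mem[OF assms]])
      (auto simp: transv_def ut_one_def intro!: ext)
  then show ?thesis using assms transv_mem by (intro inv_equality) auto
qed

lemma comm_first_row_transv:
  assumes x: "x \<in> UT_set n" and i: "1 < i" "i \<in> idx n"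
  shows "comm (UT n) (transv n 1 i 1) x =
     (\<lambda>p q. ut_one n p q + (if p = 1 then ut_one n i q - (inv\<^bsub>UT n\<^esub> x) i q else 0))"
proof -
  interpret group "UT n" by (rule group_UT)
  have one: "1 \<in> idx n" using idx_one[OF i(2)] .
  define y where "y = inv\<^bsub>UT n\<^esub> x"
  have y: "y \<in> UT_set n" using UT_inv_closed[OF x] unfolding y_def .
  have xy: "ut_mult x y = ut_one n" using x unfolding y_def by (metis UT_simps r_inv)
  have t: "transv n 1 i 1 \<in> UT_set n" using transv_mem[OF i(1) one i(2)] .
  have ti: "inv\<^bsub>UT n\<^esub> (transv n 1 i 1) = transv n 1 i (-1)" using transv_inv[OF i(1) one i(2)] .
  define X1 where "X1 = ut_mult (transv n 1 i 1) x"
  have X1: "X1 = (\<lambda>k l. x k l + (if k = 1 then x i l else 0))"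
    unfolding X1_def transv_ut_mult[OF i(1) x] by (intro ext) simp
  have X1m: "X1 \<in> UT_set n" unfolding X1_def using ut_mult_closed[OF t x] .
  define X2 where "X2 = ut_mult X1 (transv n 1 i (-1))"
  have xk1: "x k 1 = (if k = 1 then 1 else 0)" for k
    using UT_set_zero(1)[OF x, of 1 k] UT_set_zero(2)[OF x, of 0 1] UT_set_diag[OF x one]
    by (cases k) (auto simp: idx_def)
  have xi1: "x i 1 = 0" using UT_set_zero(1)[OF x] i by simp
  have X2: "X2 = (\<lambda>k l. x k l + (if k = 1 then x i l - (if l = i then 1 else 0) else 0))"
    unfolding X2_def ut_mult_transv[OF i(1) X1m] unfolding X1 using i(1)
    by (auto simp: xk1 xi1 xk1[simplified] xi1[simplified] intro!: ext)
  have X2m: "X2 \<in> UT_set n" unfolding X2_def using ut_mult_closed[OF X1m transv_mem[OF i(1) one i(2)]] .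
  have sum1: "(\<Sum>m\<in>{1..q}. x i m * y m q) = ut_mult x y i q" for q
    unfolding ut_mult_def
  proof (rule sum.mono_neutral_right)
    show "{i..q} \<subseteq> {1..q}" using i by auto
    show "\<forall>m\<in>{1..q} - {i..q}. x i m * y m q = 0" using UT_set_zero(1)[OF x] UT_set_zero(1)[OF y] by auto
  qed simp
  have sum2: "(\<Sum>m\<in>{1..q}. (if m = i then 1 else 0) * y m q) = y i q" for q
    using UT_set_zero(1)[OF y, of q i] i by (simp add: if_distrib[of "\<lambda>z. z * _"] sum.delta cong: if_cong)
  have "comm (UT n) (transv n 1 i 1) x = ut_mult X2 y"
    unfolding comm_def X2_def X1_def y_def ti by simp
  also have "\<dots> = (\<lambda>p q. ut_one n p q + (if p = 1 then ut_one n i q - y i q else 0))"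
  proof -
    have S: "(\<Sum>m\<in>{1..q}. (x i m - (if m = i then 1 else 0)) * y m q) = ut_one n i q - y i q" for q
      by (simp only: left_diff_distrib sum_subtractf sum1 sum2 xy)
    show ?thesis unfolding X2 ut_mult_add_first_row xy S ..
  qed
  finally show ?thesis unfolding y_def .
qed

lemma comm_first_row_matrix_transv:
  fixes c :: "('a::field) nmat"
  assumes c: "c \<in> UT_set n" and cf: "\<And>p q. c p q = ut_one n p q + (if p = 1 then w q else 0)"
    and kl: "2 \<le> k" "k < l" "k \<in> idx n" "l \<in> idx n"
  shows "comm (UT n) c (transv n k l 1) = transv n 1 l (w k)"
proof -
  interpret group "UT n" by (rule group_UT)
  have one: "1 \<in> idx n" using idx_one[OF kl(3)] .
  define s where "s = (transv n k l 1 :: 'a nmat)"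
  define T where "T = (transv n 1 l (w k) :: 'a nmat)"
  have s: "s \<in> UT_set n" unfolding s_def using transv_mem kl by auto
  have T: "T \<in> UT_set n" unfolding T_def using transv_mem[of 1 l n] kl one by auto
  have sc: "ut_mult s c \<in> UT_set n" using ut_mult_closed[OF s c] .
  have sce: "ut_mult s c = (\<lambda>p q. c p q + (if p = k then 1 * c l q else 0))"
    unfolding s_def using transv_ut_mult[OF kl(2) c] .
  have cse: "ut_mult c s = (\<lambda>p q. c p q + (if q = l then c p k * 1 else 0))"
    unfolding s_def using ut_mult_transv[OF kl(2) c] .
  have Tsc: "ut_mult T (ut_mult s c) = (\<lambda>p q. ut_mult s c p q + (if p = 1 then w k * ut_mult s c l q else 0))"
    unfolding T_def using transv_ut_mult[OF _ sc, of 1 l "w k"] kl by simp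
  have "ut_mult c s = ut_mult T (ut_mult s c)"
    unfolding Tsc cse using kl by (auto simp: sce cf ut_one_def intro!: ext)
  then have "c \<otimes>\<^bsub>UT n\<^esub> s = T \<otimes>\<^bsub>UT n\<^esub> s \<otimes>\<^bsub>UT n\<^esub> c" using T s c by (simp add: ut_mult_assoc)
  then have "comm (UT n) c s = T \<otimes>\<^bsub>UT n\<^esub> s \<otimes>\<^bsub>UT n\<^esub> c \<otimes>\<^bsub>UT n\<^esub> inv\<^bsub>UT n\<^esub> c \<otimes>\<^bsub>UT n\<^esub> inv\<^bsub>UT n\<^esub> s"
    unfolding comm_def by simp
  also have "\<dots> = T"
  proof -
    have T': "T \<in> carrier (UT n)" and s': "s \<in> carrier (UT n)" and c': "c \<in> carrier (UT n)"
      using T s c by simp_all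
    show ?thesis using T' s' c' by (simp add: m_assoc del: UT_simps)
  qed
  finally show ?thesis unfolding s_def T_def .
qed

lemma UT_entry_eq_inv_entry:
  assumes x: "x \<in> UT_set n" and ij: "i < j" "i \<in> idx n" "j \<in> idx n"
  shows "x i j = - (inv\<^bsub>UT n\<^esub> x) i j - (\<Sum>m\<in>{i<..<j}. x i m * (inv\<^bsub>UT n\<^esub> x) m j)"
proof -
  define y where "y = inv\<^bsub>UT n\<^esub> x"
  have y: "y \<in> UT_set n" unfolding y_def using UT_inv_closed[OF x] .
  have "ut_mult x y = ut_one n"
    using x group.r_inv[OF group_UT] unfolding y_def by (metis UT_simps)
  then have "0 = ut_mult x y i j" using ij by (simp add: ut_one_def)
  also have "\<dots> = (\<Sum>m\<in>insert i (insert j {i<..<j}). x i m * y m j)"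
    unfolding ut_mult_def using ij(1) by (intro sum.cong) auto
  also have "\<dots> = y i j + x i j + (\<Sum>m\<in>{i<..<j}. x i m * y m j)"
    using ij UT_set_diag[OF x ij(2)] UT_set_diag[OF y ij(3)] by (simp add: algebra_simps)
  finally show ?thesis unfolding y_def[symmetric] by (simp add: eq_neg_iff_add_eq_0 algebra_simps)
qed

lemma UT_entries_eq_if_inv_entries_eq:
  assumes x: "x \<in> UT_set n" and x': "x' \<in> UT_set n"
    and I: "I \<subseteq> idx n" and I_interval: "\<And>i j k. i \<in> I \<Longrightarrow> j \<in> I \<Longrightarrow> i \<le> k \<Longrightarrow> k \<le> j \<Longrightarrow> k \<in> I"
    and inv_eq: "\<And>i j. i \<in> I \<Longrightarrow> j \<in> I \<Longrightarrow> (inv\<^bsub>UT n\<^esub> x') i j = (inv\<^bsub>UT n\<^esub> x) i j"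
  shows "i \<in> I \<Longrightarrow> j \<in> I \<Longrightarrow> x' i j = x i j"
proof (induction "j - i" arbitrary: i j rule: less_induct)
  case less
  consider "j < i" | "i = j" | "i < j" by linarith
  then show ?case
  proof cases
    case 1
    then show ?thesis using UT_set_zero(1)[OF x] UT_set_zero(1)[OF x'] by simp
  next
    case 2
    then show ?thesis using UT_set_diag[OF x] UT_set_diag[OF x'] less.prems I by auto
  next
    case 3
    have ij: "i \<in> idx n" "j \<in> idx n" using less.prems I by auto
    have summand_eq: "x' i m * (inv\<^bsub>UT n\<^esub> x') m j = x i m * (inv\<^bsub>UT n\<^esub> x) m j"
      if "m \<in> {i<..<j}" for m
    proof -
      have m: "m \<in> I" using I_interval[OF less.prems, of m] that by auto
      have "x' i m = x i m" using less.hyps[of m i] less.prems(1) m that by auto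
      then show ?thesis using inv_eq[OF m less.prems(2)] by simp
    qed
    have "(\<Sum>m\<in>{i<..<j}. x' i m * (inv\<^bsub>UT n\<^esub> x') m j) = (\<Sum>m\<in>{i<..<j}. x i m * (inv\<^bsub>UT n\<^esub> x) m j)"
      by (rule sum.cong[OF refl summand_eq])
    then show ?thesis
      using UT_entry_eq_inv_entry[OF x 3 ij] UT_entry_eq_inv_entry[OF x' 3 ij] inv_eq[OF less.prems]
      by simp
  qed
qed

lemma double_comm_first_row_transv:
  assumes x: "x \<in> UT_set n" and ikl: "2 \<le> i" "i \<le> k" "k < l" "i \<in> idx n" "k \<in> idx n" "l \<in> idx n"
  shows "comm (UT n) (comm (UT n) (transv n 1 i 1) x) (transv n k l 1)
           = transv n 1 l (ut_one n i k - (inv\<^bsub>UT n\<^esub> x) i k)"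
proof (rule comm_first_row_matrix_transv)
  have "transv n 1 i 1 \<in> UT_set n"
    by (rule transv_mem) (use ikl idx_one in auto)
  then show "comm (UT n) (transv n 1 i 1) x \<in> UT_set n"
    using UT_comm_closed x by blast
qed (use comm_first_row_transv[OF x, of i] ikl in auto)

lemma PC_map_inv_entry_eq:
  fixes \<phi> :: "('a::field) nmat \<Rightarrow> 'a nmat"
  assumes pc: "PC_map (UT n) \<phi>" and ai: "almost_identity n \<phi>"
    and a: "a \<in> UT_set n" and ikl: "2 \<le> i" "i \<le> k" "k < l" "i \<in> idx n" "k \<in> idx n" "l \<in> idx n"
  shows "(inv\<^bsub>UT n\<^esub> (\<phi> a)) i k = (inv\<^bsub>UT n\<^esub> a) i k"
proof -
  have one: "1 \<in> idx n" using idx_one[OF ikl(4)] .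
  have fix_transv: "\<phi> (transv n p q \<alpha>) = transv n p q \<alpha>" if "p < q" "p \<in> idx n" "q \<in> idx n" for p q \<alpha>
    using ai that unfolding almost_identity_def by blast
  have pc_comm: "\<phi> (comm (UT n) x y) = comm (UT n) (\<phi> x) (\<phi> y)" if "x \<in> UT_set n" "y \<in> UT_set n" for x y
    using pc that unfolding PC_map_def by simp
  have \<phi>a: "\<phi> a \<in> UT_set n" using pc a unfolding PC_map_def by (metis UT_simps(1) bij_betw_apply)
  let ?t = "transv n 1 i 1" and ?s = "transv n k l 1"
  have t: "?t \<in> UT_set n" by (rule transv_mem) (use one ikl in auto)
  have s: "?s \<in> UT_set n" by (rule transv_mem) (use ikl in auto)
  have "transv n 1 l (ut_one n i k - (inv\<^bsub>UT n\<^esub> a) i k)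
          = \<phi> (comm (UT n) (comm (UT n) ?t a) ?s)"
    using double_comm_first_row_transv[OF a ikl] one ikl by (simp add: fix_transv)
  also have "\<dots> = comm (UT n) (comm (UT n) ?t (\<phi> a)) ?s"
    using pc_comm[OF UT_comm_closed[OF t a] s] pc_comm[OF t a] one ikl by (simp add: fix_transv)
  also have "\<dots> = transv n 1 l (ut_one n i k - (inv\<^bsub>UT n\<^esub> (\<phi> a)) i k)"
    using double_comm_first_row_transv[OF \<phi>a ikl] .
  finally have "transv n 1 l (ut_one n i k - (inv\<^bsub>UT n\<^esub> a) i k) 1 l
      = transv n 1 l (ut_one n i k - (inv\<^bsub>UT n\<^esub> (\<phi> a)) i k) 1 l" by simp
  then show ?thesis using ikl by (simp add: transv_def ut_one_def)
qed

theorem mainTheorem1: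
  fixes n :: enat and \<phi> :: "('a::field) nmat \<Rightarrow> 'a nmat"
  assumes "PC_map (UT n) \<phi>"
    and "almost_identity n \<phi>"
  shows "\<forall>a\<in>carrier (UT n). \<forall>i\<in>idx n. \<forall>j\<in>idx n. 2 \<le> i \<and> enat j \<le> n - 1 \<longrightarrow>
           \<phi> a i j = a i j \<and> (inv\<^bsub>UT n\<^esub> (\<phi> a)) i j = (inv\<^bsub>UT n\<^esub> a) i j"
proof (intro ballI impI)
  fix a :: "'a nmat" and i j
  assume a: "a \<in> carrier (UT n)" and ij: "i \<in> idx n" "j \<in> idx n" "2 \<le> i \<and> enat j \<le> n - 1"
  define I where "I = {m \<in> idx n. 2 \<le> m \<and> enat m \<le> n - 1}"
  have I_interval: "k \<in> I" if "p \<in> I" "q \<in> I" "p \<le> k" "k \<le> q" for p q k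
    using that idx_interval[of p n q k] order_trans[of "enat k" "enat q"] unfolding I_def by auto
  have a': "a \<in> UT_set n" using a by simp
  have \<phi>a: "\<phi> a \<in> UT_set n"
    using assms(1) a unfolding PC_map_def by (metis UT_simps(1) bij_betw_apply)
  note lower_zero = UT_set_zero(1)[OF a'] UT_set_zero(1)[OF \<phi>a]
    UT_set_zero(1)[OF UT_inv_closed[OF a']] UT_set_zero(1)[OF UT_inv_closed[OF \<phi>a]]
  have inv_eq: "(inv\<^bsub>UT n\<^esub> (\<phi> a)) p q = (inv\<^bsub>UT n\<^esub> a) p q" if "p \<in> I" "q \<in> I" for p q
  proof (cases "p \<le> q")
    case True
    have p: "2 \<le> p" "p \<in> idx n" and q: "q \<in> idx n" "Suc q \<in> idx n"
      using that idx_Suc unfolding I_def by auto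
    show ?thesis by (rule PC_map_inv_entry_eq[OF assms a' p(1) True _ p(2) q]) simp
  qed (simp add: lower_zero)
  show "\<phi> a i j = a i j \<and> (inv\<^bsub>UT n\<^esub> (\<phi> a)) i j = (inv\<^bsub>UT n\<^esub> a) i j"
  proof (cases "i \<le> j")
    case True
    then have "i \<in> I" "j \<in> I"
      using ij order_trans[of "enat i" "enat j"] unfolding I_def by auto
    moreover have "I \<subseteq> idx n" unfolding I_def by blast
    ultimately have "\<phi> a i j = a i j"
      by (intro UT_entries_eq_if_inv_entries_eq[OF a' \<phi>a]) (use I_interval inv_eq in blast)+
    then show ?thesis using inv_eq \<open>i \<in> I\<close> \<open>j \<in> I\<close> by blast
  qed (simp add: lower_zero)
qed

end
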